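(* Let $X\in\mathbb{R}^{n\times p}$, $\mathbf y\in\mathbb{R}^n$ with $\mathbf y\ne\mathbf 0$, and $\|X^T\mathbf y\|_\infty>\lambda_1>0$. Suppose $\boldsymbol\theta_1^*\ne\frac{\mathbf y}{\|X^T\mathbf y\|_\infty}$, and let $\mathbf a=\frac{\mathbf y}{\lambda_1}-\boldsymbol\theta_1^*$. For $\lambda\in(0,\lambda_1]$ define $$f(\lambda)=\frac{\langle\frac{\mathbf y}{\lambda}-\boldsymbol\theta_1^*,\mathbf a\rangle}{\|\frac{\mathbf y}{\lambda}-\boldsymbol\theta_1^*\|_2},\qquad g(\lambda)=\frac{\langle\frac{\mathbf y}{\lambda}-\boldsymbol\theta_1^*,\mathbf y\rangle}{\|\frac{\mathbf y}{\lambda}-\boldsymbol\theta_1^*\|_2}.$$ Then $f$ is strictly increasing on $(0,\lambda_1]$ and $g$ is strictly decreasing on $(0,\lambda_1]$.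
   Context: Let $F=\{\boldsymbol\theta\in\mathbb{R}^n:\|X^T\boldsymbol\theta\|_\infty\le 1\}$. For $\lambda>0$, the Lasso dual optimum $\boldsymbol\theta^*(\lambda)$ is the unique minimizer of $\frac12\|\boldsymbol\theta-\mathbf y/\lambda\|_2^2$ over $\boldsymbol\theta\in F$, i.e. the Euclidean projection of $\mathbf y/\lambda$ onto $F$. Write $\boldsymbol\theta_1^*=\boldsymbol\theta^*(\lambda_1)$. *)

theory Defs
  imports "HOL-Analysis.Analysis"
begin

definition linf_norm :: "real^'k \<Rightarrow> real" where
  "linf_norm v = Max (range (\<lambda>j. \<bar>v $ j\<bar>))"

definition dual_feasible :: "real^'p^'n \<Rightarrow> (real^'n) set" where
  "dual_feasible X = {\<theta>. linf_norm (transpose X *v \<theta>) \<le> 1}"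

definition lasso_dual_opt :: "real^'p^'n \<Rightarrow> real^'n \<Rightarrow> real \<Rightarrow> real^'n" where
  "lasso_dual_opt X y lam = closest_point (dual_feasible X) ((1/lam) *\<^sub>R y)"

end

theory Submission
  imports Defs
begin

text \<open>Put \<open>a = y/\<lambda>\<^sub>1 - \<theta>\<^sub>1\<^sup>*\<close> and \<open>s = 1/\<lambda> - 1/\<lambda>\<^sub>1 \<ge> 0\<close>, so that \<open>y/\<lambda> - \<theta>\<^sub>1\<^sup>* = a + s y\<close>.
  The points of \<open>F\<close> on the line \<open>\<real> y\<close> are the \<open>\<mu> y\<close> with \<open>|\<mu>| \<le> 1/\<parallel>X\<^sup>T y\<parallel>\<^sub>\<infinity>\<close>, and among them
  \<open>y/\<parallel>X\<^sup>T y\<parallel>\<^sub>\<infinity>\<close> is the closest to \<open>y/\<lambda>\<^sub>1\<close>; so the projection \<open>\<theta>\<^sub>1\<^sup>*\<close> is not on that line,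
  \<open>a\<close> and \<open>y\<close> are linearly independent and Cauchy-Schwarz is strict along the ray \<open>u = a + s y\<close>.
  The derivatives in \<open>s\<close> of \<open>\<langle>u, y\<rangle>/\<parallel>u\<parallel>\<close> and \<open>\<langle>u, a\<rangle>/\<parallel>u\<parallel>\<close> are \<open>G/\<parallel>u\<parallel>\<^sup>3\<close> and \<open>-s G/\<parallel>u\<parallel>\<^sup>3\<close>
  with the Gram determinant \<open>G = \<parallel>u\<parallel>\<^sup>2\<parallel>y\<parallel>\<^sup>2 - \<langle>u, y\<rangle>\<^sup>2 > 0\<close>; as \<open>s\<close> decreases in \<open>\<lambda>\<close>, \<open>g\<close> decreases
  and \<open>f\<close> increases.\<close>

lemma has_real_derivative_affine_div_sqrt_quadratic:
  fixes p q A B C x :: real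
  defines "Q \<equiv> A + 2 * x * B + x^2 * C"
  assumes "0 < Q"
  shows "((\<lambda>s. (p + s * q) / sqrt (A + 2 * s * B + s^2 * C)) has_real_derivative
     (q * Q - (p + x * q) * (B + x * C)) / (Q * sqrt Q)) (at x)"
proof -
  have "((\<lambda>s. (p + s * q) / sqrt (A + 2 * s * B + s^2 * C)) has_real_derivative
      (q * sqrt Q - (p + x * q) * ((2 * B + 2 * x * C) / (2 * sqrt Q))) / (sqrt Q * sqrt Q)) (at x)"
    using assms by (auto intro!: derivative_eq_intros simp: power2_eq_square) (simp add: divide_inverse ac_simps)
  moreover have "(q * sqrt Q - (p + x * q) * ((2 * B + 2 * x * C) / (2 * sqrt Q))) / (sqrt Q * sqrt Q)
      = (q * Q - (p + x * q) * (B + x * C)) / (Q * sqrt Q)"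
  proof -
    define r where "r = sqrt Q"
    have "0 < r" and "Q = r * r" using assms by (simp_all add: r_def)
    then show ?thesis unfolding r_def[symmetric] by (simp add: field_simps)
  qed
  ultimately show ?thesis by simp
qed

lemma inner_ray_self: "(a + s *\<^sub>R v) \<bullet> (a + s *\<^sub>R v) = a \<bullet> a + 2 * s * (a \<bullet> v) + s^2 * (v \<bullet> v)"
  for a v :: "'a::real_inner"
  by (simp add: inner_add_left inner_add_right inner_commute power2_eq_square algebra_simps)

lemma has_real_derivative_inner_div_norm_ray:
  fixes a v w :: "'a::real_inner" and x :: real
  defines "u \<equiv> a + x *\<^sub>R v"
  assumes "u \<noteq> 0"
  shows "((\<lambda>s. (a + s *\<^sub>R v) \<bullet> w / norm (a + s *\<^sub>R v)) has_real_derivative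
     ((v \<bullet> w) * (u \<bullet> u) - (u \<bullet> w) * (u \<bullet> v)) / ((u \<bullet> u) * norm u)) (at x)"
proof -
  have ray: "(\<lambda>s. (a + s *\<^sub>R v) \<bullet> w / norm (a + s *\<^sub>R v))
      = (\<lambda>s. (a \<bullet> w + s * (v \<bullet> w)) / sqrt (a \<bullet> a + 2 * s * (a \<bullet> v) + s^2 * (v \<bullet> v)))"
    by (simp only: norm_eq_sqrt_inner inner_ray_self) (simp add: inner_add_left)
  have uu: "u \<bullet> u = a \<bullet> a + 2 * x * (a \<bullet> v) + x^2 * (v \<bullet> v)"
    unfolding u_def by (rule inner_ray_self)
  have uw: "u \<bullet> w = a \<bullet> w + x * (v \<bullet> w)" and uv: "u \<bullet> v = a \<bullet> v + x * (v \<bullet> v)"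
    unfolding u_def by (simp_all add: inner_add_left)
  have "0 < u \<bullet> u" using assms by simp
  then show ?thesis
    unfolding ray unfolding norm_eq_sqrt_inner uu uw uv
    by (rule has_real_derivative_affine_div_sqrt_quadratic)
qed

lemma inner_square_less_of_not_parallel:
  fixes u v :: "'a::real_inner"
  assumes "v \<noteq> 0" and "\<And>t. u + t *\<^sub>R v \<noteq> 0"
  shows "(u \<bullet> v)^2 < (u \<bullet> u) * (v \<bullet> v)"
proof -
  define t where "t = - (u \<bullet> v) / (v \<bullet> v)"
  have "0 < (u + t *\<^sub>R v) \<bullet> (u + t *\<^sub>R v)"
    using assms(2) by simp
  also have "\<dots> = u \<bullet> u + 2 * t * (u \<bullet> v) + t^2 * (v \<bullet> v)"
    by (rule inner_ray_self)
  also have "\<dots> = u \<bullet> u - (u \<bullet> v)^2 / (v \<bullet> v)"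
    using assms(1) by (simp add: t_def field_simps power2_eq_square)
  finally show ?thesis
    using assms(1) by (simp add: field_simps)
qed

lemma ray_shift_not_parallel:
  fixes a v :: "'a::real_vector"
  assumes "\<And>s. a + s *\<^sub>R v \<noteq> 0"
  shows "(a + x *\<^sub>R v) + t *\<^sub>R v \<noteq> 0"
  using assms[of "x + t"] by (simp add: scaleR_add_left add.assoc)

lemma strict_mono_inner_div_norm_ray:
  fixes a v :: "'a::real_inner"
  assumes "v \<noteq> 0" and "\<And>s. a + s *\<^sub>R v \<noteq> 0"
  shows "strict_mono (\<lambda>s. (a + s *\<^sub>R v) \<bullet> v / norm (a + s *\<^sub>R v))"
proof -
  have deriv: "\<exists>D. ((\<lambda>s. (a + s *\<^sub>R v) \<bullet> v / norm (a + s *\<^sub>R v)) has_real_derivative D) (at x) \<and> 0 < D"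
    for x :: real
  proof -
    define u where "u = a + x *\<^sub>R v"
    have "u \<noteq> 0"
      unfolding u_def by (rule assms(2))
    have "(u \<bullet> v)^2 < (u \<bullet> u) * (v \<bullet> v)"
      unfolding u_def by (rule inner_square_less_of_not_parallel[OF assms(1) ray_shift_not_parallel[OF assms(2)]])
    with \<open>u \<noteq> 0\<close> have "0 < ((v \<bullet> v) * (u \<bullet> u) - (u \<bullet> v) * (u \<bullet> v)) / ((u \<bullet> u) * norm u)"
      by (intro divide_pos_pos) (simp_all add: power2_eq_square mult.commute)
    with has_real_derivative_inner_div_norm_ray[of a x v v, folded u_def, OF \<open>u \<noteq> 0\<close>]
    show ?thesis by blast
  qed
  show ?thesis
    by (rule strict_monoI, rule DERIV_pos_imp_increasing) (use deriv in blast)+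
qed

lemma strict_antimono_on_inner_div_norm_ray:
  fixes a v :: "'a::real_inner"
  assumes "v \<noteq> 0" and "\<And>s. a + s *\<^sub>R v \<noteq> 0"
  shows "strict_antimono_on {0..} (\<lambda>s. (a + s *\<^sub>R v) \<bullet> a / norm (a + s *\<^sub>R v))"
proof (rule monotone_onI)
  fix s1 s2 :: real
  assume "s1 \<in> {0..}" "s2 \<in> {0..}" "s1 < s2"
  let ?h = "\<lambda>s. (a + s *\<^sub>R v) \<bullet> a / norm (a + s *\<^sub>R v)"
  have deriv: "(?h has_real_derivative
      - x * ((u \<bullet> u) * (v \<bullet> v) - (u \<bullet> v)^2) / ((u \<bullet> u) * norm u)) (at x)"
    if u_def: "u = a + x *\<^sub>R v" for x u
  proof -
    have "a = u - x *\<^sub>R v"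
      using u_def by simp
    then have "(v \<bullet> a) * (u \<bullet> u) - (u \<bullet> a) * (u \<bullet> v) = - x * ((u \<bullet> u) * (v \<bullet> v) - (u \<bullet> v)^2)"
      by (simp only:) (simp add: inner_diff_right inner_commute power2_eq_square algebra_simps)
    with has_real_derivative_inner_div_norm_ray[of a x v a, folded u_def] show ?thesis
      using assms(2) u_def by simp
  qed
  show "?h s2 < ?h s1"
  proof (rule DERIV_neg_imp_decreasing_open[OF \<open>s1 < s2\<close>])
    fix x assume "s1 < x" "x < s2"
    define u where "u = a + x *\<^sub>R v"
    have "u \<noteq> 0"
      unfolding u_def by (rule assms(2))
    have "(u \<bullet> v)^2 < (u \<bullet> u) * (v \<bullet> v)"
      unfolding u_def by (rule inner_square_less_of_not_parallel[OF assms(1) ray_shift_not_parallel[OF assms(2)]])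
    moreover have "0 < x"
      using \<open>s1 \<in> {0..}\<close> \<open>s1 < x\<close> by simp
    ultimately have "- x * ((u \<bullet> u) * (v \<bullet> v) - (u \<bullet> v)^2) / ((u \<bullet> u) * norm u) < 0"
      using \<open>u \<noteq> 0\<close> by (intro divide_neg_pos) simp_all
    with deriv[OF u_def] show "\<exists>D. (?h has_real_derivative D) (at x) \<and> D < 0"
      by blast
  next
    show "continuous_on {s1..s2} ?h"
      by (rule DERIV_atLeastAtMost_imp_continuous_on) (use deriv in blast)
  qed
qed

lemma linf_norm_ge: "\<bar>v $ j\<bar> \<le> linf_norm v"
  unfolding linf_norm_def by (rule Max_ge) auto

lemma linf_norm_le_iff: "linf_norm v \<le> c \<longleftrightarrow> (\<forall>j. \<bar>v $ j\<bar> \<le> c)"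
  unfolding linf_norm_def by (subst Max_le_iff) auto

lemma linf_norm_attained: obtains j where "linf_norm v = \<bar>v $ j\<bar>"
proof -
  have "linf_norm v \<in> range (\<lambda>j. \<bar>v $ j\<bar>)"
    unfolding linf_norm_def by (rule Max_in) auto
  then show ?thesis using that by blast
qed

lemma linf_norm_scaleR: "linf_norm (c *\<^sub>R v) = \<bar>c\<bar> * linf_norm v"
proof (rule antisym)
  show "linf_norm (c *\<^sub>R v) \<le> \<bar>c\<bar> * linf_norm v"
    unfolding linf_norm_le_iff by (simp add: abs_mult linf_norm_ge mult_left_mono)
  obtain j where "linf_norm v = \<bar>v $ j\<bar>" by (rule linf_norm_attained)
  then show "\<bar>c\<bar> * linf_norm v \<le> linf_norm (c *\<^sub>R v)"
    using linf_norm_ge[of "c *\<^sub>R v" j] by (simp add: abs_mult)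
qed

lemma closed_dual_feasible: "closed (dual_feasible X)"
proof -
  have "dual_feasible X = {\<theta>. \<forall>j. \<bar>(transpose X *v \<theta>) $ j\<bar> \<le> 1}"
    unfolding dual_feasible_def linf_norm_le_iff by simp
  also have "closed \<dots>"
    by (intro closed_Collect_all closed_Collect_le continuous_intros)
  finally show ?thesis .
qed

lemma scaleR_mem_dual_feasible_iff:
  "c *\<^sub>R y \<in> dual_feasible X \<longleftrightarrow> \<bar>c\<bar> * linf_norm (transpose X *v y) \<le> 1"
  unfolding dual_feasible_def mem_Collect_eq matrix_vector_mult_scaleR linf_norm_scaleR ..

lemma closest_point_on_line_eq:
  fixes y :: "'a::{real_inner,heine_borel}"
  assumes "closed S" and "y \<noteq> 0" and "t\<^sub>0 *\<^sub>R y \<in> S" and "t\<^sub>0 \<le> t"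
    and "\<And>\<mu>. \<mu> *\<^sub>R y \<in> S \<Longrightarrow> \<mu> \<le> t\<^sub>0"
    and "closest_point S (t *\<^sub>R y) = \<mu> *\<^sub>R y"
  shows "\<mu> = t\<^sub>0"
proof -
  have "\<mu> *\<^sub>R y \<in> S"
    using assms(1,3,6) closest_point_in_set by (metis empty_iff)
  then have "\<mu> \<le> t\<^sub>0" by (rule assms(5))
  have "dist (t *\<^sub>R y) (\<mu> *\<^sub>R y) \<le> dist (t *\<^sub>R y) (t\<^sub>0 *\<^sub>R y)"
    using closest_point_le[OF assms(1,3)] assms(6) by metis
  then have "\<bar>t - \<mu>\<bar> \<le> \<bar>t - t\<^sub>0\<bar>"
    using assms(2) by simp
  then show ?thesis
    using \<open>\<mu> \<le> t\<^sub>0\<close> \<open>t\<^sub>0 \<le> t\<close> by linarith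
qed

lemma lasso_dual_opt_not_parallel:
  assumes "y \<noteq> 0" and "0 < lam" and "lam < linf_norm (transpose X *v y)"
    and "lasso_dual_opt X y lam \<noteq> (1 / linf_norm (transpose X *v y)) *\<^sub>R y"
  shows "lasso_dual_opt X y lam \<noteq> \<mu> *\<^sub>R y"
proof
  let ?lmax = "linf_norm (transpose X *v y)"
  assume opt: "lasso_dual_opt X y lam = \<mu> *\<^sub>R y"
  have "\<mu> = 1 / ?lmax"
  proof (rule closest_point_on_line_eq[OF closed_dual_feasible \<open>y \<noteq> 0\<close>])
    show "(1 / ?lmax) *\<^sub>R y \<in> dual_feasible X"
      using assms(2,3) by (simp add: scaleR_mem_dual_feasible_iff)
    show "1 / ?lmax \<le> 1 / lam"
      using assms(2,3) by (simp add: frac_le)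
    show "\<nu> \<le> 1 / ?lmax" if "\<nu> *\<^sub>R y \<in> dual_feasible X" for \<nu>
    proof -
      have "\<nu> * ?lmax \<le> \<bar>\<nu>\<bar> * ?lmax"
        using assms(2,3) by (intro mult_right_mono) simp_all
      also have "\<dots> \<le> 1"
        using that by (simp add: scaleR_mem_dual_feasible_iff)
      finally show ?thesis
        using assms(2,3) by (simp add: field_simps)
    qed
    show "closest_point (dual_feasible X) ((1 / lam) *\<^sub>R y) = \<mu> *\<^sub>R y"
      using opt by (simp add: lasso_dual_opt_def)
  qed
  with opt assms(4) show False by simp
qed

theorem lemma5:
  fixes X :: "real^'p^'n" and y :: "real^'n" and lam1 :: real
  assumes "y \<noteq> 0"
    and "0 < lam1" and "lam1 < linf_norm (transpose X *v y)"
    and "lasso_dual_opt X y lam1 \<noteq> (1 / linf_norm (transpose X *v y)) *\<^sub>R y"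
  defines "f \<equiv> (\<lambda>lam. (((1/lam) *\<^sub>R y - lasso_dual_opt X y lam1) \<bullet> ((1/lam1) *\<^sub>R y - lasso_dual_opt X y lam1))
                    / norm ((1/lam) *\<^sub>R y - lasso_dual_opt X y lam1))"
    and "g \<equiv> (\<lambda>lam. (((1/lam) *\<^sub>R y - lasso_dual_opt X y lam1) \<bullet> y)
                    / norm ((1/lam) *\<^sub>R y - lasso_dual_opt X y lam1))"
  shows "strict_mono_on {0<..lam1} f \<and> strict_antimono_on {0<..lam1} g"
proof -
  define a where "a = (1/lam1) *\<^sub>R y - lasso_dual_opt X y lam1"
  have not_parallel: "a + s *\<^sub>R y \<noteq> 0" for s
  proof
    assume "a + s *\<^sub>R y = 0"
    then have "lasso_dual_opt X y lam1 = (1/lam1 + s) *\<^sub>R y"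
      unfolding a_def by (simp add: algebra_simps scaleR_add_left)
    with lasso_dual_opt_not_parallel[OF assms(1-4)] show False by blast
  qed
  have shift: "(1/lam) *\<^sub>R y - lasso_dual_opt X y lam1 = a + (1/lam - 1/lam1) *\<^sub>R y" for lam
    by (simp add: a_def algebra_simps)
  have f_ray: "f lam = (a + (1/lam - 1/lam1) *\<^sub>R y) \<bullet> a / norm (a + (1/lam - 1/lam1) *\<^sub>R y)" for lam
    unfolding f_def a_def[symmetric] unfolding shift ..
  have g_ray: "g lam = (a + (1/lam - 1/lam1) *\<^sub>R y) \<bullet> y / norm (a + (1/lam - 1/lam1) *\<^sub>R y)" for lam
    unfolding g_def shift ..
  have reparam: "0 \<le> 1/l' - 1/lam1" "1/l' - 1/lam1 < 1/l - 1/lam1"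
    if "l \<in> {0<..lam1}" "l' \<in> {0<..lam1}" "l < l'" for l l'
    using that by (auto simp: frac_le frac_less2)
  show ?thesis
  proof (intro conjI monotone_onI)
    fix l l' assume "l \<in> {0<..lam1}" "l' \<in> {0<..lam1}" "l < l'"
    note s = reparam[OF this]
    show "f l < f l'"
      unfolding f_ray
      using strict_antimono_on_inner_div_norm_ray[OF assms(1) not_parallel, THEN monotone_onD] s
      by auto
    show "g l' < g l"
      unfolding g_ray
      using strict_mono_inner_div_norm_ray[OF assms(1) not_parallel, THEN strict_monoD] s
      by auto
  qed
qed

end
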